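(* Every eigenfunction of $K$ (in particular each of the functions $\phi_1,\phi_2,\phi_3,\ldots$) is continuous on $[0,1]$.
   Context: Let $K:[0,1]\times[0,1]\to\mathbb R$ be defined by $K(x,y)=\frac12-\{(xy)^{-1}\}$ if $0<x,y\le 1$, and $K(x,y)=0$ if $0\le x,y\le1$ and $xy=0$, where $\{\alpha\}=\alpha-\lfloor\alpha\rfloor$. Let $L^2([0,1])$ denote the space of real-valued Lebesgue measurable square-integrable functions on $[0,1]$, with $\langle f,g\rangle=\int_0^1 f(x)g(x)\,dx$ and $\|f\|=\langle f,f\rangle^{1/2}$. A function $\phi$ is an eigenfunction of $K$ (with eigenvalue $\lambda\in\mathbb R$) if $\phi\in L^2([0,1])$, $\|\phi\|>0$, and $\phi(x)=\lambda\int_0^1 K(x,y)\phi(y)\,dy$ for every $x\in[0,1]$. Let $\phi_1,\phi_2,\ldots$ be a maximal orthonormal system in $L^2([0,1])$ of eigenfunctions of $K$, $\phi_j$ having the nonzero real eigenvalue $\lambda_j$, numbered so that $0<|\lambda_1|\le|\lambda_2|\le\cdots$ and $\lambda_j\ge\lambda_{j+1}$ whenever $|\lambda_j|=|\lambda_{j+1}|$. *)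

theory Defs
  imports "HOL-Analysis.Analysis"
begin

definition Kker :: "real \<Rightarrow> real \<Rightarrow> real" where
  "Kker x y = (if x * y = 0 then 0 else 1/2 - frac (1 / (x * y)))"

definition L2_01 :: "(real \<Rightarrow> real) \<Rightarrow> bool" where
  "L2_01 f \<longleftrightarrow> set_borel_measurable lebesgue {0..1} f \<and>
                 set_integrable lebesgue {0..1} (\<lambda>x. (f x)^2)"

definition L2_norm01 :: "(real \<Rightarrow> real) \<Rightarrow> real" where
  "L2_norm01 f = sqrt (LINT x:{0..1}|lebesgue. (f x)^2)"

definition eigenfunction_K :: "(real \<Rightarrow> real) \<Rightarrow> real \<Rightarrow> bool" where
  "eigenfunction_K phi lam \<longleftrightarrow> L2_01 phi \<and> L2_norm01 phi > 0 \<and>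
     (\<forall>x\<in>{0..1}. phi x = lam * (LINT y:{0..1}|lebesgue. Kker x y * phi y))"

end

theory Submission
  imports Defs
begin

text \<open>
  For \<open>x > 0\<close> the kernel \<open>K(-,y)\<close> is
  continuous at \<open>x\<close> for all but countably many \<open>y\<close> (those with \<open>1/(xy) \<in> \<int>\<close>), so dominated
  convergence makes \<open>K_transform \<phi>\<close>, hence \<open>\<phi>\<close>, continuous on (0,1]; as \<open>|K| \<le> 1/2\<close>, \<open>\<phi>\<close> is
  also bounded. At 0 we have \<open>K_transform \<phi> 0 = 0\<close> and must show \<open>K_transform \<phi> x \<rightarrow> 0\<close>.
  The integral over [0,a] is small because \<open>\<phi>\<close> is bounded. On [a,1] we replace \<open>\<phi>\<close> by a
  uniformly close polynomial \<open>p\<close> and integrate by parts against \<open>P(1/(xy))\<close>, where \<open>P\<close> is the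
  bounded periodic primitive of the sawtooth \<open>1/2 - frac t\<close>: since
  \<open>d/dy P(1/(xy)) = -(1/2 - frac(1/(xy))) / (x y\<^sup>2)\<close>, this gives
  \<open>\<integral>\<^sub>a\<^sup>1 K(x,y) p(y) dy = O(x)\<close>.
\<close>

definition sawtooth_primitive :: "real \<Rightarrow> real" where
  "sawtooth_primitive t = (frac t - (frac t)\<^sup>2) / 2"

lemma sawtooth_primitive_nonneg: "0 \<le> sawtooth_primitive t"
  unfolding sawtooth_primitive_def power2_eq_square
  using frac_lt_1[of t] by (simp add: mult_left_le)

lemma sawtooth_primitive_le: "sawtooth_primitive t \<le> 1/8"
proof -
  have "frac t - (frac t)\<^sup>2 = 1/4 - (frac t - 1/2)\<^sup>2"
    by (simp add: power2_eq_square algebra_simps)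
  moreover have "0 \<le> (frac t - 1/2)\<^sup>2"
    by simp
  ultimately have "frac t - (frac t)\<^sup>2 \<le> 1/4"
    by linarith
  then show ?thesis
    unfolding sawtooth_primitive_def by simp
qed

lemma sawtooth_primitive_le_dist_Ints:
  assumes "m \<in> \<int>"
  shows "sawtooth_primitive t \<le> \<bar>t - m\<bar> / 2"
proof -
  have "frac t * (1 - frac t) \<le> frac t" "frac t * (1 - frac t) \<le> 1 - frac t"
    using frac_lt_1[of t] by (auto intro: mult_right_le_one_le mult_left_le_one_le)
  moreover have "frac t \<le> t - m \<or> 1 - frac t \<le> m - t"
  proof (cases "m \<le> t")
    case True
    then have "m \<le> of_int \<lfloor>t\<rfloor>"
      using assms by (metis Ints_cases floor_mono floor_of_int of_int_le_iff)
    then show ?thesis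
      by (simp add: frac_def)
  next
    case False
    then have "of_int \<lfloor>t\<rfloor> + 1 \<le> m"
      using assms by (metis Ints_cases floor_less_iff not_le of_int_1 of_int_add of_int_le_iff zless_imp_add1_zle)
    then show ?thesis
      by (simp add: frac_def)
  qed
  ultimately have "frac t * (1 - frac t) \<le> \<bar>t - m\<bar>"
    by linarith
  then show ?thesis
    unfolding sawtooth_primitive_def by (simp add: power2_eq_square algebra_simps)
qed

lemma has_real_derivative_sawtooth_primitive:
  assumes "t \<notin> \<int>"
  shows "(sawtooth_primitive has_real_derivative 1/2 - frac t) (at t)"
proof -
  define n where "n = real_of_int \<lfloor>t\<rfloor>"
  have "\<forall>\<^sub>F s in at t. \<lfloor>s\<rfloor> = \<lfloor>t\<rfloor>"
    by (rule eventually_floor_eq[OF tendsto_ident_at assms])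
  then have ev: "\<forall>\<^sub>F s in nhds t. sawtooth_primitive s = ((s - n) - (s - n)\<^sup>2) / 2"
    unfolding eventually_at_filter sawtooth_primitive_def frac_def n_def
    by eventually_elim auto
  have "((\<lambda>s. ((s - n) - (s - n)\<^sup>2) / 2) has_real_derivative 1/2 - frac t) (at t)"
    by (auto intro!: derivative_eq_intros simp: n_def frac_def field_simps)
  then show ?thesis
    using DERIV_cong_ev[OF refl ev refl] by blast
qed

lemma isCont_sawtooth_primitive: "isCont sawtooth_primitive t"
proof (cases "t \<in> \<int>")
  case False
  then show ?thesis
    using has_real_derivative_sawtooth_primitive DERIV_isCont by blast
next
  case True
  have "frac t = 0"
    using True by simp
  then have "sawtooth_primitive t = 0"
    by (simp add: sawtooth_primitive_def del: frac_eq_0_iff)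
  moreover have "(sawtooth_primitive \<longlongrightarrow> 0) (at t)"
  proof (rule Lim_null_comparison)
    show "\<forall>\<^sub>F s in at t. norm (sawtooth_primitive s) \<le> \<bar>s - t\<bar> / 2"
      using sawtooth_primitive_nonneg sawtooth_primitive_le_dist_Ints[OF True] by simp
    show "((\<lambda>s. \<bar>s - t\<bar> / 2) \<longlongrightarrow> 0) (at t)"
      by (intro tendsto_eq_intros tendsto_ident_at) auto
  qed
  ultimately show ?thesis
    by (simp add: isCont_def)
qed

lemma continuous_on_sawtooth_primitive [continuous_intros]:
  assumes "continuous_on S g"
  shows "continuous_on S (\<lambda>y. sawtooth_primitive (g y))"
proof -
  have "continuous_on UNIV sawtooth_primitive"
    using isCont_sawtooth_primitive by (blast intro: continuous_at_imp_continuous_on)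
  then show ?thesis
    using continuous_on_compose2[OF _ assms subset_UNIV] by blast
qed

lemma reciprocal_in_Ints_subset_range:
  fixes x :: real
  assumes "x \<noteq> 0"
  shows "{y. 1 / (x * y) \<in> \<int>} \<subseteq> range (\<lambda>n::int. 1 / (x * of_int n))"
proof
  fix y assume "y \<in> {y. 1 / (x * y) \<in> \<int>}"
  then obtain n where n: "1 / (x * y) = of_int n"
    by (auto elim: Ints_cases)
  have "y = 1 / (x * (1 / (x * y)))"
    using assms by simp
  then have "y = 1 / (x * of_int n)"
    by (simp only: n)
  then show "y \<in> range (\<lambda>n::int. 1 / (x * of_int n))"
    by blast
qed

lemma negligible_reciprocal_in_Ints:
  fixes x :: real
  assumes "x \<noteq> 0"
  shows "negligible {y. 1 / (x * y) \<in> \<int>}"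
proof -
  have "countable {y. 1 / (x * y) \<in> \<int>}"
    using countable_subset[OF reciprocal_in_Ints_subset_range[OF assms]] by simp
  then show ?thesis
    unfolding negligible_iff_null_sets
    by (intro null_sets_completionI countable_imp_null_set_lborel)
qed

lemma finite_reciprocal_in_Ints:
  fixes x a b :: real
  assumes "0 < x" "0 < a"
  shows "finite {y \<in> {a..b}. 1 / (x * y) \<in> \<int>}"
proof -
  have "{y \<in> {a..b}. 1 / (x * y) \<in> \<int>} \<subseteq> (\<lambda>n. 1 / (x * of_int n)) ` {0..\<lceil>1 / (x * a)\<rceil>}"
  proof
    fix y assume y: "y \<in> {y \<in> {a..b}. 1 / (x * y) \<in> \<int>}"
    then obtain n where n: "1 / (x * y) = of_int n"
      by (auto elim: Ints_cases)
    have "0 < y"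
      using y assms by auto
    then have "y = 1 / (x * (1 / (x * y)))"
      using assms by simp
    then have "y = 1 / (x * of_int n)"
      by (simp only: n)
    moreover have "0 < real_of_int n" "real_of_int n \<le> 1 / (x * a)"
      unfolding n[symmetric] using y assms
      by (auto intro!: divide_left_mono mult_left_mono mult_pos_pos)
    then have "n \<in> {0..\<lceil>1 / (x * a)\<rceil>}"
      by (auto simp: le_ceiling_iff)
    ultimately show "y \<in> (\<lambda>n. 1 / (x * of_int n)) ` {0..\<lceil>1 / (x * a)\<rceil>}"
      by blast
  qed
  then show ?thesis
    by (rule finite_subset) simp
qed

lemma abs_Kker_le: "\<bar>Kker x y\<bar> \<le> 1/2"
  unfolding Kker_def using frac_ge_0[of "1 / (x * y)"] frac_lt_1[of "1 / (x * y)"]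
  by (auto simp: abs_if)

lemma Kker_borel_measurable: "Kker x \<in> borel_measurable borel"
proof -
  have [measurable]: "Measurable.pred borel (\<lambda>y::real. x * y = 0)"
    by measurable
  show ?thesis
    unfolding Kker_def frac_def by measurable
qed

lemma absolutely_integrable_Kker_mult:
  assumes "f absolutely_integrable_on S" "S \<in> sets lebesgue"
  shows "(\<lambda>y. Kker x y * f y) absolutely_integrable_on S"
proof (rule absolutely_integrable_bounded_measurable_product_real[OF _ assms(2) _ assms(1)])
  show "Kker x \<in> borel_measurable (lebesgue_on S)"
    using measurable_compose[OF id_borel_measurable_lebesgue_on Kker_borel_measurable]
    by (simp add: o_def)
  show "bounded (Kker x ` S)"
    using abs_Kker_le unfolding bounded_iff by (metis imageE real_norm_def)
qed

lemma integrable_Kker_mult: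
  fixes a b :: real
  assumes "f absolutely_integrable_on {a..b}"
  shows "(\<lambda>y. Kker x y * f y) integrable_on {a..b}"
  using absolutely_integrable_Kker_mult[OF assms] by (simp add: absolutely_integrable_on_def)

lemma norm_Kker_mult_le: "norm (Kker x y * f y) \<le> \<bar>f y\<bar> / 2"
  using mult_right_mono[OF abs_Kker_le abs_ge_zero, of x y "f y"] by (simp add: abs_mult)

lemma isCont_Kker:
  assumes "x \<noteq> 0" "y \<noteq> 0" "1 / (x * y) \<notin> \<int>"
  shows "isCont (\<lambda>x. Kker x y) x"
proof -
  have "isCont (\<lambda>x. 1 / (x * y)) x"
    using assms by (intro continuous_intros) auto
  then have "isCont (\<lambda>x. frac (1 / (x * y))) x"
    using continuous_frac[OF assms(3)] by (rule isCont_o2)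
  then have "isCont (\<lambda>x. 1/2 - frac (1 / (x * y))) x"
    by (intro continuous_intros)
  moreover have ev: "\<forall>\<^sub>F x' in nhds x. 1/2 - frac (1 / (x' * y)) = Kker x' y"
    using eventually_nhds_in_open[OF open_delete[OF open_UNIV, of 0]] assms(1,2)
    by (auto elim!: eventually_mono simp: Kker_def)
  ultimately show ?thesis
    using isCont_cong[OF ev] by simp
qed

lemma has_integral_Kker_by_parts:
  fixes x a b :: real
  assumes "0 < x" "0 < a" "a \<le> b"
    and w': "\<And>y. y \<in> {a..b} \<Longrightarrow> (w has_real_derivative w' y) (at y)"
    and "continuous_on {a..b} w'"
  defines "Q \<equiv> \<lambda>y. sawtooth_primitive (1 / (x * y))"
  shows "((\<lambda>y. Kker x y * w y / y\<^sup>2) has_integral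
           x * (Q a * w a - Q b * w b + integral {a..b} (\<lambda>y. Q y * w' y))) {a..b}"
proof -
  define Q' where "Q' y = (1/2 - frac (1 / (x * y))) * (- 1 / (x * y\<^sup>2))" for y
  have Q_cont: "continuous_on {a..b} Q"
    unfolding Q_def using assms(1,2) by (intro continuous_intros) auto
  have Q_deriv: "(Q has_vector_derivative Q' y) (at y)"
    if "y \<in> {a<..<b} - {y \<in> {a..b}. 1 / (x * y) \<in> \<int>}" for y
  proof -
    have "((\<lambda>y. 1 / (x * y)) has_real_derivative - 1 / (x * y\<^sup>2)) (at y)"
      using that assms(1,2) by (auto intro!: derivative_eq_intros simp: power2_eq_square field_simps)
    from DERIV_chain2[OF has_real_derivative_sawtooth_primitive this] show ?thesis
      using that unfolding Q_def Q'_def has_real_derivative_iff_has_vector_derivative[symmetric]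
      by simp
  qed
  have w_cont: "continuous_on {a..b} w"
    using w' by (meson DERIV_isCont continuous_at_imp_continuous_on)
  have "((\<lambda>y. Q y * w' y) has_integral integral {a..b} (\<lambda>y. Q y * w' y)) {a..b}"
    using Q_cont assms(5) by (intro integrable_integral integrable_continuous_interval continuous_intros)
  then have "((\<lambda>y. Q' y * w y) has_integral
               Q b * w b - Q a * w a - integral {a..b} (\<lambda>y. Q y * w' y)) {a..b}"
    using w' by (intro integration_by_parts_interior_strong[OF bounded_bilinear_mult
        finite_reciprocal_in_Ints[OF assms(1,2)] \<open>a \<le> b\<close> Q_cont w_cont Q_deriv])
      (auto simp: has_real_derivative_iff_has_vector_derivative)
  then have "((\<lambda>y. - x * (Q' y * w y)) has_integral
               - x * (Q b * w b - Q a * w a - integral {a..b} (\<lambda>y. Q y * w' y))) {a..b}"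
    by (rule has_integral_cmult_real)
  moreover have "- x * (Q' y * w y) = Kker x y * w y / y\<^sup>2" if "y \<in> {a..b}" for y
    using that assms(1,2) unfolding Q'_def Kker_def by (simp add: field_simps)
  ultimately have "((\<lambda>y. Kker x y * w y / y\<^sup>2) has_integral
      - x * (Q b * w b - Q a * w a - integral {a..b} (\<lambda>y. Q y * w' y))) {a..b}"
    by (rule has_integral_eq[rotated])
  then show ?thesis
    by (rule has_integral_eq_rhs) (simp add: algebra_simps)
qed

lemma Kker_integral_le_linear:
  fixes a b :: real
  assumes "0 < a" "a \<le> b"
    and p': "\<And>y. y \<in> {a..b} \<Longrightarrow> (p has_real_derivative p' y) (at y)"
    and "continuous_on {a..b} p'"
  obtains C where "\<And>x. 0 < x \<Longrightarrow> \<bar>integral {a..b} (\<lambda>y. Kker x y * p y)\<bar> \<le> C * x"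
proof -
  define w where "w y = y\<^sup>2 * p y" for y
  define w' where "w' y = 2 * y * p y + y\<^sup>2 * p' y" for y
  have w_deriv: "(w has_real_derivative w' y) (at y)" if "y \<in> {a..b}" for y
    unfolding w_def w'_def using p'[OF that] by (auto intro!: derivative_eq_intros)
  have "continuous_on {a..b} p"
    using p' by (meson DERIV_isCont continuous_at_imp_continuous_on)
  then have w'_cont: "continuous_on {a..b} w'"
    unfolding w'_def using assms(4) by (intro continuous_intros)
  obtain M where M: "\<And>y. y \<in> {a..b} \<Longrightarrow> \<bar>w' y\<bar> \<le> M"
    using continuous_on_compact_bound[OF compact_Icc w'_cont] by auto
  show ?thesis
  proof
    fix x :: real assume "0 < x"
    define Q where "Q y = sawtooth_primitive (1 / (x * y))" for y
    define I where "I = integral {a..b} (\<lambda>y. Q y * w' y)"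
    have Q: "0 \<le> Q y" "Q y \<le> 1/8" for y
      unfolding Q_def by (rule sawtooth_primitive_nonneg sawtooth_primitive_le)+
    have "((\<lambda>y. Kker x y * w y / y\<^sup>2) has_integral x * (Q a * w a - Q b * w b + I)) {a..b}"
      unfolding Q_def I_def by (rule has_integral_Kker_by_parts[OF \<open>0 < x\<close> assms(1,2) w_deriv w'_cont])
    moreover have "Kker x y * w y / y\<^sup>2 = Kker x y * p y" if "y \<in> {a..b}" for y
      using that assms(1) by (simp add: w_def)
    ultimately have "integral {a..b} (\<lambda>y. Kker x y * p y) = x * (Q a * w a - Q b * w b + I)"
      by (metis (no_types, lifting) has_integral_eq integral_unique)
    moreover have "\<bar>I\<bar> \<le> (b - a) * M / 8"
    proof -
      have "norm I \<le> integral {a..b} (\<lambda>y. M / 8)"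
        unfolding I_def
      proof (rule integral_norm_bound_integral)
        show "(\<lambda>y. Q y * w' y) integrable_on {a..b}"
          unfolding Q_def using \<open>0 < x\<close> assms(1) w'_cont
          by (intro integrable_continuous_interval continuous_intros) auto
        show "(\<lambda>y. M / 8) integrable_on {a..b}"
          by (rule integrable_const_ivl)
        fix y assume "y \<in> {a..b}"
        then have "Q y * \<bar>w' y\<bar> \<le> 1/8 * M"
          using Q[of y] M[of y] by (intro mult_mono) auto
        then show "norm (Q y * w' y) \<le> M / 8"
          using Q[of y] by (simp add: abs_mult)
      qed
      then show ?thesis
        using assms(2) by simp
    qed
    moreover have "\<bar>Q a * w a - Q b * w b\<bar> \<le> Q a * \<bar>w a\<bar> + Q b * \<bar>w b\<bar>"
      using abs_triangle_ineq4[of "Q a * w a" "Q b * w b"] Q by (simp add: abs_mult)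
    moreover have "Q a * \<bar>w a\<bar> + Q b * \<bar>w b\<bar> \<le> (\<bar>w a\<bar> + \<bar>w b\<bar>) / 8"
      using mult_right_mono[OF Q(2), of "\<bar>w a\<bar>" a] mult_right_mono[OF Q(2), of "\<bar>w b\<bar>" b] by simp
    ultimately have "\<bar>Q a * w a - Q b * w b + I\<bar> \<le> (\<bar>w a\<bar> + \<bar>w b\<bar> + (b - a) * M) / 8"
      using abs_triangle_ineq[of "Q a * w a - Q b * w b" I] by (simp add: field_simps)
    with \<open>integral {a..b} (\<lambda>y. Kker x y * p y) = x * (Q a * w a - Q b * w b + I)\<close>
    show "\<bar>integral {a..b} (\<lambda>y. Kker x y * p y)\<bar> \<le> ((\<bar>w a\<bar> + \<bar>w b\<bar> + (b - a) * M) / 8) * x"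
      using \<open>0 < x\<close> by (simp add: abs_mult mult.commute mult_left_mono)
  qed
qed

lemma Kker_integral_tendsto_zero:
  fixes a b :: real
  assumes "0 < a" "a \<le> b" and g: "continuous_on {a..b} g"
  shows "((\<lambda>x. integral {a..b} (\<lambda>y. Kker x y * g y)) \<longlongrightarrow> 0) (at_right 0)"
  unfolding tendsto_iff dist_real_def
proof (intro allI impI)
  fix e :: real assume "0 < e"
  have Kker_integrable: "(\<lambda>y. Kker x y * h y) integrable_on {a..b}"
    if "continuous_on {a..b} h" for x h
    using integrable_Kker_mult[OF absolutely_integrable_continuous_real[OF that]] .
  define \<delta> where "\<delta> = e / (b - a + 1)"
  have "0 < \<delta>"
    using \<open>0 < e\<close> assms(2) by (simp add: \<delta>_def)
  then obtain h where h: "real_polynomial_function h" "\<And>y. y \<in> {a..b} \<Longrightarrow> \<bar>g y - h y\<bar> < \<delta>"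
    using Stone_Weierstrass_real_polynomial_function[OF compact_Icc g] by blast
  obtain h' where h': "real_polynomial_function h'" "\<And>y. (h has_real_derivative h' y) (at y)"
    using has_real_derivative_polynomial_function[OF h(1)] by blast
  have h_cont: "continuous_on {a..b} h" and h'_cont: "continuous_on {a..b} h'"
    using h(1) h'(1) by (auto intro: continuous_at_imp_continuous_on continuous_real_polymonial_function)
  obtain C where C: "\<And>x. 0 < x \<Longrightarrow> \<bar>integral {a..b} (\<lambda>y. Kker x y * h y)\<bar> \<le> C * x"
    using Kker_integral_le_linear[OF assms(1,2) h'(2) h'_cont] by blast
  have approx: "\<bar>integral {a..b} (\<lambda>y. Kker x y * g y) - integral {a..b} (\<lambda>y. Kker x y * h y)\<bar> < e / 2"
    for x
  proof -
    have "norm (integral {a..b} (\<lambda>y. Kker x y * g y - Kker x y * h y)) \<le> integral {a..b} (\<lambda>y. \<delta> / 2)"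
    proof (rule integral_norm_bound_integral)
      show "(\<lambda>y. Kker x y * g y - Kker x y * h y) integrable_on {a..b}"
        using Kker_integrable g h_cont by (intro integrable_diff)
      fix y assume "y \<in> {a..b}"
      then have "\<bar>Kker x y\<bar> * \<bar>g y - h y\<bar> \<le> 1/2 * \<delta>"
        using abs_Kker_le h(2) by (intro mult_mono) (auto simp: less_imp_le)
      then show "norm (Kker x y * g y - Kker x y * h y) \<le> \<delta> / 2"
        by (simp add: abs_mult right_diff_distrib[symmetric])
    qed (rule integrable_const_ivl)
    also have "\<dots> = (b - a) * \<delta> / 2"
      using assms(2) by simp
    also have "\<dots> < e / 2"
      using \<open>0 < e\<close> assms(2) by (simp add: \<delta>_def field_simps)
    finally show ?thesis
      using Kker_integrable g h_cont by (simp add: integral_diff)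
  qed
  have "\<forall>\<^sub>F x in at_right 0. C * x < e / 2"
    unfolding eventually_at_right_field
  proof (intro exI conjI allI impI)
    show "0 < e / (2 * (\<bar>C\<bar> + 1))"
      using \<open>0 < e\<close> by simp
    fix x :: real assume "0 < x" "x < e / (2 * (\<bar>C\<bar> + 1))"
    then have "(\<bar>C\<bar> + 1) * x < e / 2"
      by (simp add: field_simps)
    moreover have "C * x \<le> (\<bar>C\<bar> + 1) * x"
      using \<open>0 < x\<close> by (intro mult_right_mono) auto
    ultimately show "C * x < e / 2"
      by linarith
  qed
  then show "\<forall>\<^sub>F x in at_right 0. \<bar>integral {a..b} (\<lambda>y. Kker x y * g y) - 0\<bar> < e"
    using eventually_at_right_less[of 0]
  proof eventually_elim
    case (elim x)
    then show ?case
      using approx[of x] C[of x] by linarith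
  qed
qed

lemma L2_01_imp_absolutely_integrable:
  assumes "L2_01 f"
  shows "f absolutely_integrable_on {0..1}"
proof -
  interpret finite_measure "lebesgue_on {0..1::real}"
    by (rule finite_measure_lebesgue_on) simp
  have "f \<in> borel_measurable (lebesgue_on {0..1})" "integrable (lebesgue_on {0..1}) (\<lambda>x. (f x)\<^sup>2)"
    using assms unfolding L2_01_def
    by (simp_all add: set_borel_measurable_def borel_measurable_restrict_space_iff set_integrable_eq)
  then have "integrable (lebesgue_on {0..1}) f"
    by (rule square_integrable_imp_integrable)
  then show ?thesis
    by (simp add: set_integrable_eq)
qed

definition K_transform :: "(real \<Rightarrow> real) \<Rightarrow> real \<Rightarrow> real" where
  "K_transform f x = integral {0..1} (\<lambda>y. Kker x y * f y)"

lemma K_transform_0 [simp]: "K_transform f 0 = 0"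
  by (simp add: K_transform_def Kker_def)

lemma abs_K_transform_le:
  assumes "f absolutely_integrable_on {0..1}"
  shows "\<bar>K_transform f x\<bar> \<le> integral {0..1} (\<lambda>y. \<bar>f y\<bar>) / 2"
proof -
  have "(\<lambda>y. \<bar>f y\<bar> / 2) integrable_on {0..1}"
    using assms by (simp add: absolutely_integrable_on_def)
  then have "norm (K_transform f x) \<le> integral {0..1} (\<lambda>y. \<bar>f y\<bar> / 2)"
    unfolding K_transform_def
    by (intro integral_norm_bound_integral integrable_Kker_mult[OF assms] norm_Kker_mult_le)
  then show ?thesis
    by simp
qed

lemma isCont_K_transform:
  assumes f: "f absolutely_integrable_on {0..1}" and "x \<noteq> 0"
  shows "isCont (K_transform f) x"
proof (rule continuous_at_sequentiallyI)
  fix u :: "nat \<Rightarrow> real" assume u: "u \<longlonglongrightarrow> x"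
  define T where "T = {0..1} - {y. 1 / (x * y) \<in> \<int>}"
  have N: "negligible {y. 1 / (x * y) \<in> \<int>}"
    using negligible_reciprocal_in_Ints[OF \<open>x \<noteq> 0\<close>] .
  have K_transform_T: "K_transform f v = integral T (\<lambda>y. Kker v y * f y)" for v
    unfolding K_transform_def by (intro integral_spike_set negligible_subset[OF N]) (auto simp: T_def)
  have integrable_T: "g integrable_on T" if "g integrable_on {0..1}" for g :: "real \<Rightarrow> real"
    using that by (rule integrable_spike_set) (auto simp: T_def intro: negligible_subset[OF N])
  \<comment> \<open>\<open>T\<close> excludes \<open>y = 0\<close> as well, because \<open>1 / (x * 0) = 0 \<in> \<int>\<close>.\<close>
  have "(\<lambda>k. Kker (u k) y * f y) \<longlonglongrightarrow> Kker x y * f y" if "y \<in> T" for y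
  proof -
    have "y \<noteq> 0" "1 / (x * y) \<notin> \<int>"
      using that by (auto simp: T_def)
    then show ?thesis
      using isCont_tendsto_compose[OF isCont_Kker[OF \<open>x \<noteq> 0\<close>] u] by (intro tendsto_mult_right)
  qed
  moreover have "(\<lambda>y. \<bar>f y\<bar> / 2) integrable_on {0..1}"
    using f by (simp add: absolutely_integrable_on_def)
  ultimately have "(\<lambda>k. integral T (\<lambda>y. Kker (u k) y * f y)) \<longlonglongrightarrow> integral T (\<lambda>y. Kker x y * f y)"
    using integrable_T integrable_Kker_mult[OF f] norm_Kker_mult_le
    by (intro dominated_convergence(2)[of _ _ "\<lambda>y. \<bar>f y\<bar> / 2"]) auto
  then show "(\<lambda>k. K_transform f (u k)) \<longlonglongrightarrow> K_transform f x"
    by (simp only: K_transform_T)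
qed

lemma K_transform_tendsto_zero:
  assumes f: "f absolutely_integrable_on {0..1}"
    and bound: "\<And>y. y \<in> {0..1} \<Longrightarrow> \<bar>f y\<bar> \<le> B"
    and cont: "continuous_on {0<..1} f"
  shows "(K_transform f \<longlongrightarrow> 0) (at_right 0)"
  unfolding tendsto_iff dist_real_def
proof (intro allI impI)
  fix e :: real assume "0 < e"
  define a where "a = min 1 (e / (\<bar>B\<bar> + 1))"
  have a: "0 < a" "a \<le> 1"
    using \<open>0 < e\<close> by (auto simp: a_def)
  have head: "\<bar>integral {0..a} (\<lambda>y. Kker x y * f y)\<bar> < e / 2" for x
  proof -
    have "norm (integral {0..a} (\<lambda>y. Kker x y * f y)) \<le> integral {0..a} (\<lambda>y. \<bar>B\<bar> / 2)"
    proof (rule integral_norm_bound_integral)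
      show "(\<lambda>y. Kker x y * f y) integrable_on {0..a}"
        using integrable_subinterval_real[OF integrable_Kker_mult[OF f]] a by simp
      fix y assume "y \<in> {0..a}"
      then have "\<bar>f y\<bar> / 2 \<le> \<bar>B\<bar> / 2"
        using bound[of y] a by auto
      then show "norm (Kker x y * f y) \<le> \<bar>B\<bar> / 2"
        using norm_Kker_mult_le[of x y f] by linarith
    qed (rule integrable_const_ivl)
    also have "\<dots> = a * \<bar>B\<bar> / 2"
      using a by simp
    also have "\<dots> \<le> e / (\<bar>B\<bar> + 1) * \<bar>B\<bar> / 2"
      unfolding a_def by (intro divide_right_mono mult_right_mono) auto
    also have "\<dots> < e / 2"
      using \<open>0 < e\<close> by (simp add: field_simps)
    finally show ?thesis
      by simp
  qed
  have "continuous_on {a..1} f"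
    using a by (auto intro: continuous_on_subset[OF cont])
  then have "\<forall>\<^sub>F x in at_right 0. \<bar>integral {a..1} (\<lambda>y. Kker x y * f y)\<bar> < e / 2"
    using tendstoD[OF Kker_integral_tendsto_zero[OF a], of f "e / 2"] \<open>0 < e\<close>
    by (simp add: dist_real_def)
  then show "\<forall>\<^sub>F x in at_right 0. \<bar>K_transform f x - 0\<bar> < e"
  proof eventually_elim
    case (elim x)
    have "K_transform f x = integral {0..a} (\<lambda>y. Kker x y * f y) + integral {a..1} (\<lambda>y. Kker x y * f y)"
      unfolding K_transform_def using a integrable_Kker_mult[OF f]
      by (simp add: Henstock_Kurzweil_Integration.integral_combine)
    then show ?case
      using head[of x] elim by linarith
  qed
qed

lemma continuous_on_K_transform:
  assumes "f absolutely_integrable_on {0..1}"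
    and "\<And>y. y \<in> {0..1} \<Longrightarrow> \<bar>f y\<bar> \<le> B"
    and "continuous_on {0<..1} f"
  shows "continuous_on {0..1} (K_transform f)"
  unfolding continuous_on_eq_continuous_within
proof
  fix x :: real assume "x \<in> {0..1}"
  show "continuous (at x within {0..1}) (K_transform f)"
  proof (cases "x = 0")
    case True
    then show ?thesis
      using K_transform_tendsto_zero[OF assms]
      by (simp add: continuous_within at_within_Icc_at_right)
  next
    case False
    then show ?thesis
      using isCont_K_transform[OF assms(1)] continuous_at_imp_continuous_within by blast
  qed
qed

theorem theorem2p10:
  fixes phi :: "real \<Rightarrow> real" and lam :: real
  assumes "eigenfunction_K phi lam"
  shows "continuous_on {0..1} phi"
proof -
  have phi_int: "phi absolutely_integrable_on {0..1}"
    using assms L2_01_imp_absolutely_integrable by (simp add: eigenfunction_K_def)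
  have phi_eq: "phi x = lam * K_transform phi x" if "x \<in> {0..1}" for x
    using assms that set_lebesgue_integral_eq_integral(2)[OF absolutely_integrable_Kker_mult[OF phi_int]]
    by (simp add: eigenfunction_K_def K_transform_def)
  have "continuous_on {0<..1} (\<lambda>x. lam * K_transform phi x)"
    using isCont_K_transform[OF phi_int]
    by (intro continuous_intros continuous_at_imp_continuous_on) auto
  then have "continuous_on {0<..1} phi"
    using phi_eq by (auto intro: continuous_on_eq)
  moreover have "\<bar>phi y\<bar> \<le> \<bar>lam\<bar> * (integral {0..1} (\<lambda>y. \<bar>phi y\<bar>) / 2)" if "y \<in> {0..1}" for y
    using phi_eq[OF that] mult_left_mono[OF abs_K_transform_le[OF phi_int] abs_ge_zero]
    by (simp add: abs_mult)
  ultimately have "continuous_on {0..1} (\<lambda>x. lam * K_transform phi x)"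
    by (intro continuous_intros continuous_on_K_transform[OF phi_int])
  then show ?thesis
    using phi_eq by (auto intro: continuous_on_eq)
qed

end
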